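(* Let $\alpha$ be an ordinal and let $X$ be a metric space expressed as a union $X=\bigcup_{i\in I}X_i$. Suppose that $\{X_i\}_{i\in I}\in\mathfrak{C}_\alpha$ and that for every $r>0$ there is a subspace $Y(r)\subset X$ with $\{Y(r)\}\in\mathfrak{C}_\alpha$ such that the collection $\{X_i\setminus Y(r)\}_{i\in I}$ is $r$-disjoint. Then $\{X\}\in\mathfrak{C}_{\alpha+1}$.
   Context: A family $\mathcal{U}$ of metric subspaces of a metric space $(X,d)$ is $r$-disjoint if $d(x,y)>r$ whenever $x\in U$, $y\in U'$, $U\neq U'$ in $\mathcal{U}$. For families $\mathcal{X},\mathcal{Y}$ and $R\in\mathbb{R}^{\mathbb{N}}$, $\mathcal{X}\xrightarrow{R}\mathcal{Y}$ means: there is an integer $k$ such that for each $X\in\mathcal{X}$ there are subcollections $\mathcal{U}_1,\dots,\mathcal{U}_k\subseteq\mathcal{Y}$ of subspaces of $X$, each $\mathcal{U}_i$ being $R_i$-disjoint, with $\bigcup_i\mathcal{U}_i$ covering $X$. A family is bounded if the diameters of its members are uniformly bounded. $\mathfrak{C}_0$ is the class of bounded families; for an ordinal $\alpha>0$, $\mathfrak{C}_\alpha$ is the class of families $\mathcal{X}$ such that for every $R\in\mathbb{R}^{\mathbb{N}}$ there exist $\beta<\alpha$ and $\mathcal{Y}\in\mathfrak{C}_\beta$ with $\mathcal{X}\xrightarrow{R}\mathcal{Y}$. All subspaces carry the induced metric. *)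

theory Defs
  imports Main "HOL.Real_Vector_Spaces"
begin

text \<open>A family of subspaces of a metric space is modelled as a set of subsets of
  a metric-space type; each subspace carries the induced metric.\<close>

definition r_disjoint :: "real \<Rightarrow> ('a::metric_space) set set \<Rightarrow> bool" where
  "r_disjoint r \<U> \<longleftrightarrow>
     (\<forall>U\<in>\<U>. \<forall>U'\<in>\<U>. U \<noteq> U' \<longrightarrow> (\<forall>x\<in>U. \<forall>y\<in>U'. dist x y > r))"

definition bounded_family :: "('a::metric_space) set set \<Rightarrow> bool" where
  "bounded_family \<X> \<longleftrightarrow> (\<exists>B. \<forall>U\<in>\<X>. \<forall>x\<in>U. \<forall>y\<in>U. dist x y \<le> B)"

text \<open>The relation X --R--> Y; the sequence R is indexed R 1, R 2, ...\<close>
definition decomposes :: "(nat \<Rightarrow> real) \<Rightarrow> ('a::metric_space) set set \<Rightarrow> 'a set set \<Rightarrow> bool" where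
  "decomposes R \<X> \<Y> \<longleftrightarrow>
     (\<exists>k::nat. \<forall>X\<in>\<X>. \<exists>\<U>::nat \<Rightarrow> 'a set set.
        (\<forall>i\<in>{1..k}. \<U> i \<subseteq> \<Y> \<and> (\<forall>V\<in>\<U> i. V \<subseteq> X) \<and> r_disjoint (R i) (\<U> i))
        \<and> X \<subseteq> (\<Union>i\<in>{1..k}. \<Union>(\<U> i)))"

text \<open>The classes C_alpha, with ordinals represented by elements of an arbitrary
  well-ordered type. Since the recursion is along a well-order, the inductive
  (least fixed point) definition coincides with the transfinite recursion.\<close>
inductive C_class :: "'o::wellorder \<Rightarrow> ('a::metric_space) set set \<Rightarrow> bool" where
  zero: "(\<forall>\<beta>. \<not> \<beta> < \<alpha>) \<Longrightarrow> bounded_family \<X> \<Longrightarrow> C_class \<alpha> \<X>"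
| succ: "(\<exists>\<beta>. \<beta> < \<alpha>) \<Longrightarrow>
         (\<forall>R. \<exists>\<beta><\<alpha>. \<exists>\<Y>. C_class \<beta> \<Y> \<and> decomposes R \<X> \<Y>) \<Longrightarrow> C_class \<alpha> \<X>"

end

theory Submission
  imports Defs
begin

text \<open>Cover \<open>X\<close> by \<open>X_i \<setminus> Y(r)\<close>, which form an \<open>r\<close>-disjoint family, together
  with the single set \<open>Y(r)\<close>: this is an \<open>R\<close>-decomposition of \<open>{X}\<close> with \<open>k = 2\<close> as soon
  as \<open>r \<ge> R\<^sub>1\<close>. The pieces lie in the family \<open>{X_i} \<union> {Y(r)}\<close> up to passing to subsets,
  and each class \<open>\<CC>\<^sub>\<alpha>\<close> is closed under unions of two families and under passing to
  subsets (both by transfinite induction on \<open>\<alpha>\<close>), so the pieces form a family in \<open>\<CC>\<^sub>\<alpha>\<close>.\<close>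

definition decomposition ::
    "(nat \<Rightarrow> real) \<Rightarrow> nat \<Rightarrow> ('a::metric_space) set \<Rightarrow> 'a set set \<Rightarrow> (nat \<Rightarrow> 'a set set) \<Rightarrow> bool"
  where "decomposition R k X \<Y> \<U> \<longleftrightarrow>
     (\<forall>i\<in>{1..k}. \<U> i \<subseteq> \<Y> \<and> (\<forall>V\<in>\<U> i. V \<subseteq> X) \<and> r_disjoint (R i) (\<U> i))
     \<and> X \<subseteq> (\<Union>i\<in>{1..k}. \<Union>(\<U> i))"

lemma decomposes_iff_decomposition:
  "decomposes R \<X> \<Y> \<longleftrightarrow> (\<exists>k. \<forall>X\<in>\<X>. \<exists>\<U>. decomposition R k X \<Y> \<U>)"
  unfolding decomposes_def decomposition_def ..

definition refines :: "'a set set \<Rightarrow> 'a set set \<Rightarrow> bool" where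
  "refines \<X>' \<X> \<longleftrightarrow> (\<forall>A\<in>\<X>'. \<exists>B\<in>\<X>. A \<subseteq> B)"

definition subset_closure :: "'a set set \<Rightarrow> 'a set set" where
  "subset_closure \<X> = {A. \<exists>B\<in>\<X>. A \<subseteq> B}"

lemma refines_subset_closure_iff: "refines \<X>' \<X> \<longleftrightarrow> \<X>' \<subseteq> subset_closure \<X>"
  unfolding refines_def subset_closure_def by blast

lemma r_disjoint_empty [simp]: "r_disjoint r {}"
  and r_disjoint_singleton [simp]: "r_disjoint r {U}"
  by (simp_all add: r_disjoint_def)

lemma r_disjoint_mono: "r_disjoint r \<U> \<Longrightarrow> r' \<le> r \<Longrightarrow> r_disjoint r' \<U>"
  unfolding r_disjoint_def by (meson order_le_less_trans)

lemma r_disjoint_image_Int: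
  assumes "r_disjoint r \<U>"
  shows "r_disjoint r ((\<lambda>V. V \<inter> A) ` \<U>)"
  using assms unfolding r_disjoint_def by blast

lemma bounded_family_refines:
  "bounded_family \<X> \<Longrightarrow> refines \<X>' \<X> \<Longrightarrow> bounded_family \<X>'"
  unfolding bounded_family_def refines_def by (meson subsetD)

lemma bounded_family_Un:
  assumes "bounded_family \<X>1" "bounded_family \<X>2"
  shows "bounded_family (\<X>1 \<union> \<X>2)"
proof -
  obtain B1 where B1: "\<forall>U\<in>\<X>1. \<forall>x\<in>U. \<forall>y\<in>U. dist x y \<le> B1"
    using assms(1) unfolding bounded_family_def by blast
  obtain B2 where B2: "\<forall>U\<in>\<X>2. \<forall>x\<in>U. \<forall>y\<in>U. dist x y \<le> B2"
    using assms(2) unfolding bounded_family_def by blast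
  have "dist x y \<le> max B1 B2" if "U \<in> \<X>1 \<union> \<X>2" "x \<in> U" "y \<in> U" for U x y
    using that B1 B2 by (force simp: le_max_iff_disj)
  then show ?thesis unfolding bounded_family_def by blast
qed

lemma decompositionI:
  assumes "\<And>i. i \<in> {1..k} \<Longrightarrow> \<U> i \<subseteq> \<Y> \<and> (\<forall>V\<in>\<U> i. V \<subseteq> X) \<and> r_disjoint (R i) (\<U> i)"
    and "X \<subseteq> (\<Union>i\<in>{1..k}. \<Union>(\<U> i))"
  shows "decomposition R k X \<Y> \<U>"
  using assms unfolding decomposition_def by blast

lemma decompositionD:
  assumes "decomposition R k X \<Y> \<U>"
  shows decomposition_piece: "i \<in> {1..k} \<Longrightarrow> \<U> i \<subseteq> \<Y> \<and> (\<forall>V\<in>\<U> i. V \<subseteq> X) \<and> r_disjoint (R i) (\<U> i)"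
    and decomposition_covers: "X \<subseteq> (\<Union>i\<in>{1..k}. \<Union>(\<U> i))"
  using assms unfolding decomposition_def by auto

lemma decomposition_enlarge:
  assumes "decomposition R k X \<Y> \<U>" "k \<le> k'" "\<Y> \<subseteq> \<Y>'"
  shows "\<exists>\<U>'. decomposition R k' X \<Y>' \<U>'"
proof
  define \<U>' where "\<U>' i = (if i \<le> k then \<U> i else {})" for i
  have "\<U>' i \<subseteq> \<Y>' \<and> (\<forall>V\<in>\<U>' i. V \<subseteq> X) \<and> r_disjoint (R i) (\<U>' i)"
    if "i \<in> {1..k'}" for i
  proof (cases "i \<le> k")
    case True
    with that have "i \<in> {1..k}" by simp
    from decomposition_piece[OF assms(1) this] show ?thesis
      using assms(3) True by (auto simp: \<U>'_def)
  qed (simp add: \<U>'_def)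
  moreover have "(\<Union>i\<in>{1..k}. \<Union>(\<U> i)) \<subseteq> (\<Union>i\<in>{1..k'}. \<Union>(\<U>' i))"
    using assms(2) by (intro UN_mono) (auto simp: \<U>'_def)
  then have "X \<subseteq> (\<Union>i\<in>{1..k'}. \<Union>(\<U>' i))"
    using decomposition_covers[OF assms(1)] by (rule order_trans[rotated])
  ultimately show "decomposition R k' X \<Y>' \<U>'"
    by (rule decompositionI)
qed

lemma decomposition_restrict:
  assumes "decomposition R k X \<Y> \<U>" "X' \<subseteq> X"
  shows "\<exists>\<U>'. decomposition R k X' (subset_closure \<Y>) \<U>'"
proof
  define \<U>' where "\<U>' i = (\<lambda>V. V \<inter> X') ` \<U> i" for i
  have "\<U>' i \<subseteq> subset_closure \<Y> \<and> (\<forall>V\<in>\<U>' i. V \<subseteq> X') \<and> r_disjoint (R i) (\<U>' i)"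
    if "i \<in> {1..k}" for i
    using decomposition_piece[OF assms(1) that]
    by (auto simp: \<U>'_def subset_closure_def r_disjoint_image_Int)
  moreover have "X' \<subseteq> (\<Union>i\<in>{1..k}. \<Union>(\<U>' i))"
    using decomposition_covers[OF assms(1)] assms(2) by (auto simp: \<U>'_def)
  ultimately show "decomposition R k X' (subset_closure \<Y>) \<U>'"
    by (rule decompositionI)
qed

lemma decomposes_refl: "decomposes R \<X> \<X>"
  unfolding decomposes_iff_decomposition
proof (intro exI ballI)
  fix X assume "X \<in> \<X>"
  then show "decomposition R 1 X \<X> (\<lambda>_. {X})"
    by (simp add: decomposition_def)
qed

lemma decomposes_refines:
  assumes "decomposes R \<X> \<Y>" "refines \<X>' \<X>"
  shows "decomposes R \<X>' (subset_closure \<Y>)"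
proof -
  obtain k where k: "\<forall>X\<in>\<X>. \<exists>\<U>. decomposition R k X \<Y> \<U>"
    using assms(1) unfolding decomposes_iff_decomposition by blast
  have "\<exists>\<U>. decomposition R k X' (subset_closure \<Y>) \<U>" if "X' \<in> \<X>'" for X'
  proof -
    obtain X where "X \<in> \<X>" "X' \<subseteq> X"
      using assms(2) \<open>X' \<in> \<X>'\<close> unfolding refines_def by blast
    with k show ?thesis by (meson decomposition_restrict)
  qed
  then show ?thesis unfolding decomposes_iff_decomposition by blast
qed

lemma decomposes_Un:
  assumes "decomposes R \<X>1 \<Y>1" "decomposes R \<X>2 \<Y>2"
  shows "decomposes R (\<X>1 \<union> \<X>2) (\<Y>1 \<union> \<Y>2)"
proof -
  obtain k1 where k1: "\<forall>X\<in>\<X>1. \<exists>\<U>. decomposition R k1 X \<Y>1 \<U>"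
    using assms(1) unfolding decomposes_iff_decomposition by blast
  obtain k2 where k2: "\<forall>X\<in>\<X>2. \<exists>\<U>. decomposition R k2 X \<Y>2 \<U>"
    using assms(2) unfolding decomposes_iff_decomposition by blast
  have "\<exists>\<U>. decomposition R (max k1 k2) X (\<Y>1 \<union> \<Y>2) \<U>" if "X \<in> \<X>1 \<union> \<X>2" for X
    using that k1 k2 decomposition_enlarge[of R _ X _ _ "max k1 k2" "\<Y>1 \<union> \<Y>2"]
    by (meson Un_iff max.cobounded1 max.cobounded2 sup.cobounded1 sup.cobounded2)
  then show ?thesis unfolding decomposes_iff_decomposition by blast
qed

lemma decomposes_singleton_two_pieces:
  assumes "r_disjoint (R 1) \<U>1" "r_disjoint (R 2) \<U>2"
    and "\<forall>V\<in>\<U>1 \<union> \<U>2. V \<subseteq> X" "X \<subseteq> \<Union>\<U>1 \<union> \<Union>\<U>2"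
  shows "decomposes R {X} (\<U>1 \<union> \<U>2)"
proof -
  let ?\<U> = "\<lambda>i::nat. if i = 1 then \<U>1 else \<U>2"
  have "{1..2::nat} = {1, 2}" by auto
  then have "decomposition R 2 X (\<U>1 \<union> \<U>2) ?\<U>"
    using assms unfolding decomposition_def by auto
  then show ?thesis unfolding decomposes_iff_decomposition by blast
qed

lemma C_class_bottom_iff:
  "\<not> (\<exists>\<beta>. \<beta> < \<alpha>) \<Longrightarrow> C_class \<alpha> \<X> \<longleftrightarrow> bounded_family \<X>"
  by (auto elim: C_class.cases intro: C_class.zero)

lemma C_class_decomposes:
  "C_class \<alpha> \<X> \<Longrightarrow> \<gamma> < \<alpha> \<Longrightarrow> \<exists>\<beta><\<alpha>. \<exists>\<Y>. C_class \<beta> \<Y> \<and> decomposes R \<X> \<Y>"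
  by (auto elim: C_class.cases)

lemma C_class_mono:
  assumes "C_class \<beta> \<Y>" "\<beta> \<le> \<alpha>"
  shows "C_class \<alpha> \<Y>"
proof (cases "\<beta> = \<alpha>")
  case False
  then have "\<beta> < \<alpha>" using assms(2) by simp
  then show ?thesis
    using assms(1) decomposes_refl by (intro C_class.succ) blast+
qed (use assms in simp)

lemma C_class_refines:
  assumes "C_class \<alpha> \<X>" "refines \<X>' \<X>"
  shows "C_class \<alpha> \<X>'"
  using assms
proof (induction arbitrary: \<X>' rule: C_class.induct)
  case (zero \<alpha> \<X>)
  then show ?case by (blast intro: C_class.zero bounded_family_refines)
next
  case (succ \<alpha> \<X>)
  show ?case
  proof (intro C_class.succ[OF succ.hyps(1)] allI)
    fix R
    obtain \<beta> \<Y> where "\<beta> < \<alpha>" "decomposes R \<X> \<Y>"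
      and IH: "\<And>\<Y>'. refines \<Y>' \<Y> \<Longrightarrow> C_class \<beta> \<Y>'"
      using succ.IH by blast
    moreover have "C_class \<beta> (subset_closure \<Y>)"
      by (rule IH) (simp add: refines_subset_closure_iff)
    ultimately show "\<exists>\<beta><\<alpha>. \<exists>\<Y>. C_class \<beta> \<Y> \<and> decomposes R \<X>' \<Y>"
      using decomposes_refines succ.prems by blast
  qed
qed

lemma C_class_Un:
  fixes \<alpha> :: "'o::wellorder"
  shows "C_class \<alpha> \<X>1 \<Longrightarrow> C_class \<alpha> \<X>2 \<Longrightarrow> C_class \<alpha> (\<X>1 \<union> \<X>2)"
proof (induction \<alpha> arbitrary: \<X>1 \<X>2 rule: less_induct)
  case (less \<alpha>)
  show ?case
  proof (cases "\<exists>\<beta>. \<beta> < \<alpha>")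
    case False
    then show ?thesis
      using less.prems by (simp add: C_class_bottom_iff bounded_family_Un)
  next
    case True
    show ?thesis
    proof (intro C_class.succ[OF True] allI)
      fix R
      obtain \<beta>1 \<Y>1 where 1: "\<beta>1 < \<alpha>" "C_class \<beta>1 \<Y>1" "decomposes R \<X>1 \<Y>1"
        using C_class_decomposes[OF less.prems(1)] True by blast
      obtain \<beta>2 \<Y>2 where 2: "\<beta>2 < \<alpha>" "C_class \<beta>2 \<Y>2" "decomposes R \<X>2 \<Y>2"
        using C_class_decomposes[OF less.prems(2)] True by blast
      have "C_class (max \<beta>1 \<beta>2) (\<Y>1 \<union> \<Y>2)"
        using 1 2 by (intro less.IH C_class_mono[of _ _ "max \<beta>1 \<beta>2"]) auto
      moreover have "max \<beta>1 \<beta>2 < \<alpha>" using 1 2 by simp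
      ultimately show "\<exists>\<beta><\<alpha>. \<exists>\<Y>. C_class \<beta> \<Y> \<and> decomposes R (\<X>1 \<union> \<X>2) \<Y>"
        using decomposes_Un[OF 1(3) 2(3)] by blast
    qed
  qed
qed

theorem theorem4p1:
  fixes \<alpha> \<beta> :: "'o::wellorder"
    and X :: "('a::metric_space) set"
    and I :: "'i set"
    and Xi :: "'i \<Rightarrow> 'a set"
    and Y :: "real \<Rightarrow> 'a set"
  assumes beta_succ: "\<forall>\<gamma>. \<gamma> < \<beta> \<longleftrightarrow> \<gamma> \<le> \<alpha>"
    and union: "X = (\<Union>i\<in>I. Xi i)"
    and fam: "C_class \<alpha> (Xi ` I)"
    and Yr: "\<forall>r>0. Y r \<subseteq> X \<and> C_class \<alpha> {Y r} \<and> r_disjoint r ((\<lambda>i. Xi i - Y r) ` I)"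
  shows "C_class \<beta> {X}"
proof (intro C_class.succ allI)
  show "\<exists>\<gamma>. \<gamma> < \<beta>" using beta_succ by blast
  fix R :: "nat \<Rightarrow> real"
  define r where "r = max (R 1) 1"
  define \<U> where "\<U> = (\<lambda>i. Xi i - Y r) ` I"
  have "r > 0" "R 1 \<le> r" unfolding r_def by auto
  then have Y: "Y r \<subseteq> X" "C_class \<alpha> {Y r}" "r_disjoint (R 1) \<U>"
    using Yr r_disjoint_mono unfolding \<U>_def by blast+
  have "C_class \<alpha> (\<U> \<union> {Y r})"
    using C_class_Un[OF fam Y(2)] by (rule C_class_refines) (auto simp: refines_def \<U>_def)
  moreover have "decomposes R {X} (\<U> \<union> {Y r})"
    using Y union by (intro decomposes_singleton_two_pieces) (auto simp: \<U>_def)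
  moreover have "\<alpha> < \<beta>" using beta_succ by simp
  ultimately show "\<exists>\<gamma><\<beta>. \<exists>\<Y>. C_class \<gamma> \<Y> \<and> decomposes R {X} \<Y>" by blast
qed

end
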